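(* Let $\mu$ be a probability measure on $\mathbb{R}$ satisfying the standing assumptions below and $\int_{\mathbb{R}}|x|\,d\mu<+\infty$. Let $\vec X_n=(X_1,\dots,X_n)$ be i.i.d. random variables with law $\mu$. Then, for every $k\in\mathbb{N}$, $\mathbb{E}[SC_{opt}(\vec X_n)]\to W_1(\mu,\nu^{(k)})$ as $n\to\infty$, where $\nu^{(k)}$ is a solution to $\min_{\lambda\in\mathcal{P}_k(\mathbb{R})}W_1(\mu,\lambda)$. In particular, $\mathbb{E}[SC_{opt}(\vec X_n)]>0$ for $n$ large enough.
   Context: For $\vec x\in\mathbb{R}^n$ and facility locations $\vec y\in\mathbb{R}^k$, $SC(\vec x,\vec y)=\frac1n\sum_{i=1}^n\min_{j\in[k]}|x_i-y_j|$ and $SC_{opt}(\vec x)=\min_{\vec y\in\mathbb{R}^k}SC(\vec x,\vec y)$. $\mathcal{P}_k(\mathbb{R})$ is the set of probability measures $\sum_{j=1}^k\nu_j\delta_{x_j}$ with $x_j\in\mathbb{R}$, $\nu_j\ge0$, $\sum_j\nu_j=1$. $W_1(\alpha,\beta)=\min_{\pi\in\Pi(\alpha,\beta)}\int|x-y|\,d\pi$ (the 1-Wasserstein distance; $\Pi(\alpha,\beta)$ the couplings). Standing assumptions on $\mu$: $\mu$ is absolutely continuous with density $\rho_\mu$; its support is an interval (bounded or not) on whose interior $\rho_\mu$ is strictly positive; $\rho_\mu$ is differentiable on the support of $\mu$. *)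

theory Defs
  imports "HOL-Probability.Probability"
begin

definition SC :: "nat \<Rightarrow> (nat \<Rightarrow> real) \<Rightarrow> nat \<Rightarrow> (nat \<Rightarrow> real) \<Rightarrow> real" where
  "SC n x k y = (1 / real n) * (\<Sum>i<n. Min ((\<lambda>j. \<bar>x i - y j\<bar>) ` {..<k}))"

text \<open>Optimal social cost: minimum (infimum, attained) over all y in R^k.\<close>
definition SC_opt :: "nat \<Rightarrow> (nat \<Rightarrow> real) \<Rightarrow> nat \<Rightarrow> real" where
  "SC_opt n x k = (INF y \<in> {y. \<forall>j\<ge>k. y j = 0}. SC n x k y)"

definition Pk :: "nat \<Rightarrow> real measure set" where
  "Pk k = {m. \<exists>(p :: nat \<Rightarrow> real) (w :: nat \<Rightarrow> real).
      (\<forall>j<k. w j \<ge> 0) \<and> (\<Sum>j<k. w j) = 1 \<and> sets m = sets borel \<and>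
      (\<forall>A \<in> sets borel. emeasure m A = (\<Sum>j<k. ennreal (w j) * indicator A (p j)))}"

definition couplings :: "real measure \<Rightarrow> real measure \<Rightarrow> (real \<times> real) measure set" where
  "couplings \<alpha> \<beta> = {\<pi>. sets \<pi> = sets (borel \<Otimes>\<^sub>M borel) \<and>
      distr \<pi> borel fst = \<alpha> \<and> distr \<pi> borel snd = \<beta>}"

definition W1 :: "real measure \<Rightarrow> real measure \<Rightarrow> ennreal" where
  "W1 \<alpha> \<beta> = (INF \<pi> \<in> couplings \<alpha> \<beta>. \<integral>\<^sup>+ z. ennreal \<bar>fst z - snd z\<bar> \<partial>\<pi>)"

end

theory Submission
  imports Defs
begin

(*
  For centres y_0, ..., y_(k-1) let F(y) be the mu-expected distance to the nearest centre.
  A measure in Pk with atoms y is at W1-distance at least F(y) from mu, and transporting each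
  point to its nearest centre shows that this bound is attained, so min over Pk of W1 is min F.
  The minimum of F exists by Fatou's lemma: along a minimising sequence with monotone
  coordinates, centres escaping to infinity do not lower the cost in the limit.

  Fixing the centres gives E SC_opt <= min F. Conversely, after truncating the sample to
  [-R, R] the centres may be replaced by the points of a finite net, and the weak law of large
  numbers for the finitely many bounded functions so obtained gives E SC_opt >= min F - e for
  large n. Finally, min F > 0 because mu has no atoms.
*)

section \<open>Distance to the nearest centre\<close>

definition nearest_dist :: "nat \<Rightarrow> (nat \<Rightarrow> real) \<Rightarrow> real \<Rightarrow> real" where
  "nearest_dist k y x = Min ((\<lambda>j. \<bar>x - y j\<bar>) ` {..<k})"

lemma SC_eq_nearest_dist: "SC n x k y = (1 / real n) * (\<Sum>i<n. nearest_dist k y (x i))"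
  unfolding SC_def nearest_dist_def ..

lemma nearest_dist_le: "j < k \<Longrightarrow> nearest_dist k y x \<le> \<bar>x - y j\<bar>"
  unfolding nearest_dist_def by (intro Min_le) auto

lemma nearest_dist_attained:
  assumes "0 < k"
  obtains j where "j < k" "nearest_dist k y x = \<bar>x - y j\<bar>"
proof -
  have "nearest_dist k y x \<in> (\<lambda>j. \<bar>x - y j\<bar>) ` {..<k}"
    unfolding nearest_dist_def using assms by (intro Min_in) auto
  then show ?thesis using that by blast
qed

lemma nearest_dist_nonneg: "0 < k \<Longrightarrow> 0 \<le> nearest_dist k y x"
  by (metis abs_ge_zero nearest_dist_attained)

lemma nearest_dist_gt: "0 < k \<Longrightarrow> (\<And>j. j < k \<Longrightarrow> b < \<bar>x - y j\<bar>) \<Longrightarrow> b < nearest_dist k y x"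
  by (metis nearest_dist_attained)

lemma nearest_dist_le_abs: "0 < k \<Longrightarrow> nearest_dist k y x \<le> \<bar>x\<bar> + \<bar>y 0\<bar>"
  using nearest_dist_le[of 0 k y x] by linarith

lemma nearest_dist_mono:
  assumes "0 < k" "\<And>j. j < k \<Longrightarrow> \<bar>x' - y' j\<bar> \<le> \<bar>x - y j\<bar>"
  shows "nearest_dist k y' x' \<le> nearest_dist k y x"
  by (metis assms nearest_dist_attained nearest_dist_le order_trans)

lemma nearest_dist_le_add:
  assumes "0 < k" "\<And>j. j < k \<Longrightarrow> \<bar>y j - y' j\<bar> \<le> e"
  shows "nearest_dist k y x \<le> nearest_dist k y' x' + \<bar>x - x'\<bar> + e"
proof -
  obtain j where j: "j < k" "nearest_dist k y' x' = \<bar>x' - y' j\<bar>"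
    using nearest_dist_attained[OF assms(1)] by metis
  have "nearest_dist k y x \<le> \<bar>x - y j\<bar>"
    using nearest_dist_le[OF j(1)] .
  also have "\<dots> \<le> \<bar>x' - y' j\<bar> + \<bar>x - x'\<bar> + e"
    using assms(2)[OF j(1)] by linarith
  finally show ?thesis using j(2) by simp
qed

lemma borel_measurable_nearest_dist[measurable]:
  "(\<lambda>\<omega>. nearest_dist k y (f \<omega>)) \<in> borel_measurable M" if [measurable]: "f \<in> borel_measurable M"
  unfolding nearest_dist_def by measurable

definition nearest_index :: "nat \<Rightarrow> (nat \<Rightarrow> real) \<Rightarrow> real \<Rightarrow> nat" where
  "nearest_index k y x = (LEAST j. \<bar>x - y j\<bar> = nearest_dist k y x)"

lemma nearest_index:
  assumes "0 < k"
  shows "nearest_index k y x < k" "\<bar>x - y (nearest_index k y x)\<bar> = nearest_dist k y x"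
proof -
  obtain j where j: "j < k" "\<bar>x - y j\<bar> = nearest_dist k y x"
    using nearest_dist_attained[OF assms] by metis
  show "nearest_index k y x < k"
    unfolding nearest_index_def using Least_le[of _ j] j by (meson le_less_trans)
  show "\<bar>x - y (nearest_index k y x)\<bar> = nearest_dist k y x"
    unfolding nearest_index_def using LeastI[of _ j] j(2) .
qed

lemma measurable_nearest_index[measurable]:
  "nearest_index k y \<in> measurable borel (count_space UNIV)"
  unfolding nearest_index_def by measurable

lemma clamp_real: "clamp a b (x::real) = max a (min b x)"
  unfolding clamp_def Basis_real_def by simp

lemma borel_measurable_clamp[measurable]:
  "(\<lambda>\<omega>. clamp a b (f \<omega> :: real)) \<in> borel_measurable M" if [measurable]: "f \<in> borel_measurable M"
  unfolding clamp_real by measurable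

lemma abs_clamp_le: "0 \<le> R \<Longrightarrow> \<bar>clamp (-R) R (x::real)\<bar> \<le> R"
  unfolding clamp_real by auto

lemma abs_diff_clamp_le: "0 \<le> R \<Longrightarrow> \<bar>x - clamp (-R) R (x::real)\<bar> \<le> \<bar>x\<bar>"
  unfolding clamp_real by auto

lemma abs_clamp_diff_le: "\<bar>clamp a b x - clamp a b (x'::real)\<bar> \<le> \<bar>x - x'\<bar>"
  using dist_clamps_le_dist_args[of a b x x'] by (simp add: dist_real_def)

section \<open>Quantisation and the Wasserstein distance to \<open>Pk\<close>\<close>

lemma (in real_distribution) distr_in_Pk:
  assumes f[measurable]: "f \<in> measurable M (count_space UNIV)" and f_less: "\<And>x. f x < k"
  shows "distr M borel (\<lambda>x. y (f x)) \<in> Pk k"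
proof -
  define w where "w j = prob (f -` {j})" for j
  have yf[measurable]: "(\<lambda>x. y (f x)) \<in> borel_measurable M"
    using measurable_compose[OF f, of y borel] by (simp add: comp_def)
  have f_events: "f -` {j} \<in> sets borel" for j
    using measurable_sets[OF f, of "{j}"] by (simp add: space_eq_univ)
  have emeasure_eq: "emeasure (distr M borel (\<lambda>x. y (f x))) A = (\<Sum>j<k. ennreal (w j) * indicator A (y j))"
    if A: "A \<in> sets borel" for A
  proof -
    have "(\<lambda>x. y (f x)) -` A = (\<Union>j\<in>{j\<in>{..<k}. y j \<in> A}. f -` {j})"
      using f_less by auto
    then have "emeasure (distr M borel (\<lambda>x. y (f x))) A = emeasure M (\<Union>j\<in>{j\<in>{..<k}. y j \<in> A}. f -` {j})"
      using A by (simp add: emeasure_distr space_eq_univ)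
    also have "\<dots> = (\<Sum>j\<in>{j\<in>{..<k}. y j \<in> A}. ennreal (w j))"
      by (subst sum_emeasure[symmetric]) (auto simp: f_events disjoint_family_on_def w_def emeasure_eq_measure)
    also have "\<dots> = (\<Sum>j<k. ennreal (w j) * indicator A (y j))"
      unfolding sum.inter_filter[OF finite_lessThan] by (intro sum.cong) (auto simp: indicator_def)
    finally show ?thesis .
  qed
  have "ennreal (\<Sum>j<k. w j) = emeasure (distr M borel (\<lambda>x. y (f x))) UNIV"
    using emeasure_eq[of UNIV] by (simp add: w_def sum_ennreal)
  also have "\<dots> = 1"
    using prob_space.emeasure_space_1[OF prob_space_distr[OF yf]] by simp
  finally have "(\<Sum>j<k. w j) = 1"
    by (simp add: w_def sum_nonneg)
  then show ?thesis
    unfolding Pk_def mem_Collect_eq using emeasure_eq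
    by (intro exI[of _ y] exI[of _ w] conjI) (simp_all add: w_def)
qed

lemma (in real_distribution) W1_distr_le:
  assumes [measurable]: "T \<in> borel_measurable borel"
  shows "W1 M (distr M borel T) \<le> (\<integral>\<^sup>+x. ennreal \<bar>x - T x\<bar> \<partial>M)"
proof -
  define \<pi> where "\<pi> = distr M (borel \<Otimes>\<^sub>M borel) (\<lambda>x. (x, T x))"
  have "distr \<pi> borel fst = M"
    unfolding \<pi>_def by (subst distr_distr) (simp_all add: comp_def distr_id2)
  moreover have "distr \<pi> borel snd = distr M borel T"
    unfolding \<pi>_def by (subst distr_distr) (simp_all add: comp_def)
  ultimately have "\<pi> \<in> couplings M (distr M borel T)"
    unfolding couplings_def by (simp add: \<pi>_def)
  then have "W1 M (distr M borel T) \<le> (\<integral>\<^sup>+z. ennreal \<bar>fst z - snd z\<bar> \<partial>\<pi>)"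
    unfolding W1_def by (rule INF_lower)
  also have "\<dots> = (\<integral>\<^sup>+x. ennreal \<bar>x - T x\<bar> \<partial>M)"
    unfolding \<pi>_def by (simp add: nn_integral_distr)
  finally show ?thesis .
qed

lemma (in real_distribution) exists_Pk_W1_le_nearest_dist:
  assumes "0 < k"
  shows "\<exists>\<nu>\<in>Pk k. W1 M \<nu> \<le> (\<integral>\<^sup>+x. ennreal (nearest_dist k y x) \<partial>M)"
proof
  let ?T = "\<lambda>x. y (nearest_index k y x)"
  show "distr M borel ?T \<in> Pk k"
    by (rule distr_in_Pk) (simp_all add: nearest_index assms)
  show "W1 M (distr M borel ?T) \<le> (\<integral>\<^sup>+x. ennreal (nearest_dist k y x) \<partial>M)"
    using W1_distr_le[of ?T] by (simp add: nearest_index[OF assms])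
qed

lemma Pk_AE_atoms:
  assumes "\<nu> \<in> Pk k"
  obtains p where "AE x in \<nu>. x \<in> p ` {..<k}"
proof -
  obtain p w where sets_\<nu>: "sets \<nu> = sets borel"
    and emeasure_\<nu>: "\<forall>A\<in>sets borel. emeasure \<nu> A = (\<Sum>j<k. ennreal (w j) * indicator A (p j))"
    using assms unfolding Pk_def by blast
  have "- p ` {..<k} \<in> sets borel"
    by (intro borel_open open_Compl finite_imp_closed) auto
  then have "- p ` {..<k} \<in> null_sets \<nu>"
    using emeasure_\<nu> by (auto simp: sets_\<nu> null_sets_def indicator_def)
  then have "AE x in \<nu>. x \<in> p ` {..<k}"
    by (rule AE_I') (auto simp: sets_eq_imp_space_eq[OF sets_\<nu>])
  then show ?thesis ..
qed

lemma nn_integral_nearest_dist_le_W1: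
  assumes \<nu>: "\<nu> \<in> Pk k"
  obtains p where "(\<integral>\<^sup>+x. ennreal (nearest_dist k p x) \<partial>\<mu>) \<le> W1 \<mu> \<nu>"
proof -
  obtain p where atoms: "AE x in \<nu>. x \<in> p ` {..<k}"
    using Pk_AE_atoms[OF \<nu>] .
  have "(\<integral>\<^sup>+x. ennreal (nearest_dist k p x) \<partial>\<mu>) \<le> (\<integral>\<^sup>+z. ennreal \<bar>fst z - snd z\<bar> \<partial>\<pi>)"
    if "\<pi> \<in> couplings \<mu> \<nu>" for \<pi>
  proof -
    have sets_\<pi>: "sets \<pi> = sets (borel \<Otimes>\<^sub>M borel)" and fst_\<pi>: "distr \<pi> borel fst = \<mu>"
      and snd_\<pi>: "distr \<pi> borel snd = \<nu>"
      using that unfolding couplings_def by auto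
    have [measurable]: "fst \<in> borel_measurable \<pi>" "snd \<in> borel_measurable \<pi>"
      by (simp_all add: measurable_cong_sets[OF sets_\<pi> refl])
    have [measurable]: "p ` {..<k} \<in> sets borel"
      by (intro borel_closed finite_imp_closed) auto
    have "AE z in \<pi>. snd z \<in> p ` {..<k}"
      using atoms unfolding snd_\<pi>[symmetric] by (subst (asm) AE_distr_iff) auto
    then have close: "AE z in \<pi>. nearest_dist k p (fst z) \<le> \<bar>fst z - snd z\<bar>"
      by eventually_elim (auto intro: nearest_dist_le)
    have "(\<integral>\<^sup>+x. ennreal (nearest_dist k p x) \<partial>\<mu>) = (\<integral>\<^sup>+z. ennreal (nearest_dist k p (fst z)) \<partial>\<pi>)"
      by (simp add: fst_\<pi>[symmetric] nn_integral_distr)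
    also have "\<dots> \<le> (\<integral>\<^sup>+z. ennreal \<bar>fst z - snd z\<bar> \<partial>\<pi>)"
      using close by (intro nn_integral_mono_AE) (auto elim: eventually_mono)
    finally show ?thesis .
  qed
  then have "(\<integral>\<^sup>+x. ennreal (nearest_dist k p x) \<partial>\<mu>) \<le> W1 \<mu> \<nu>"
    unfolding W1_def by (rule INF_greatest)
  then show ?thesis ..
qed

definition quant_risk :: "real measure \<Rightarrow> nat \<Rightarrow> (nat \<Rightarrow> real) \<Rightarrow> real" where
  "quant_risk \<mu> k y = (\<integral>x. nearest_dist k y x \<partial>\<mu>)"

context real_distribution
begin

lemma integrable_nearest_dist:
  assumes "integrable M (\<lambda>x. x)" "0 < k"
  shows "integrable M (\<lambda>x. nearest_dist k y x)"
proof (rule Bochner_Integration.integrable_bound)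
  show "integrable M (\<lambda>x. \<bar>x\<bar> + \<bar>y 0\<bar>)"
    using assms(1) by auto
  show "AE x in M. norm (nearest_dist k y x) \<le> norm (\<bar>x\<bar> + \<bar>y 0\<bar>)"
    using nearest_dist_le_abs[OF assms(2)] nearest_dist_nonneg[OF assms(2)] by (intro AE_I2) auto
qed measurable

lemma nn_integral_nearest_dist:
  assumes "integrable M (\<lambda>x. x)" "0 < k"
  shows "(\<integral>\<^sup>+x. ennreal (nearest_dist k y x) \<partial>M) = ennreal (quant_risk M k y)"
  unfolding quant_risk_def
  by (intro nn_integral_eq_integral integrable_nearest_dist assms AE_I2 nearest_dist_nonneg)

lemma quant_risk_nonneg: "0 < k \<Longrightarrow> 0 \<le> quant_risk M k y"
  unfolding quant_risk_def by (intro integral_nonneg_AE AE_I2 nearest_dist_nonneg)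

lemma quant_risk_pos:
  assumes int_x: "integrable M (\<lambda>x. x)" and k: "0 < k" and atomless: "\<And>x. emeasure M {x} = 0"
  shows "0 < quant_risk M k y"
proof -
  have "AE x in M. x \<notin> {y j}" for j
    using atomless by (intro AE_not_in) (simp add: null_sets_def)
  then have "AE x in M. \<forall>j\<in>{..<k}. x \<noteq> y j"
    by (intro AE_finite_allI) auto
  then have pos: "AE x in M. 0 < nearest_dist k y x"
    by eventually_elim (simp add: nearest_dist_gt k)
  have "quant_risk M k y \<noteq> 0"
  proof
    assume "quant_risk M k y = 0"
    then have "AE x in M. nearest_dist k y x = 0"
      using integral_nonneg_eq_0_iff_AE[OF integrable_nearest_dist[OF int_x k]]
      by (simp add: quant_risk_def nearest_dist_nonneg k)
    with pos have "AE x in M. False"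
      by eventually_elim simp
    then show False
      by simp
  qed
  then show ?thesis
    using quant_risk_nonneg[OF k, of y] by simp
qed

end

section \<open>Existence of an optimal quantiser\<close>

lemma monoseq_tendsto_or_abs_at_top:
  fixes u :: "nat \<Rightarrow> real"
  assumes "monoseq u"
  shows "u \<longlonglongrightarrow> lim u \<or> filterlim (\<lambda>n. \<bar>u n\<bar>) at_top sequentially"
proof (cases "Bseq u")
  case True
  then show ?thesis
    using Bseq_monoseq_convergent assms convergent_LIMSEQ_iff by blast
next
  case False
  have "\<forall>\<^sub>F n in sequentially. Z \<le> \<bar>u n\<bar>" for Z
  proof -
    have "\<not> (\<forall>n. \<bar>u n\<bar> \<le> \<bar>Z\<bar> + \<bar>u 0\<bar>)"
      using False BseqI'[of u "\<bar>Z\<bar> + \<bar>u 0\<bar>"] by auto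
    then obtain N where N: "\<bar>Z\<bar> + \<bar>u 0\<bar> < \<bar>u N\<bar>"
      by (auto simp: not_le)
    from assms consider "incseq u" | "decseq u"
      unfolding monoseq_iff by blast
    then have "Z \<le> \<bar>u n\<bar>" if "N \<le> n" for n
    proof cases
      case 1
      then show ?thesis
        using incseqD[OF 1, of 0 N] incseqD[OF 1 that] N by linarith
    next
      case 2
      then show ?thesis
        using decseqD[OF 2, of 0 N] decseqD[OF 2 that] N by linarith
    qed
    then show ?thesis
      by (rule eventually_sequentiallyI)
  qed
  then show ?thesis
    by (simp add: filterlim_at_top)
qed

lemma monoseq_comp_strict_mono: "monoseq u \<Longrightarrow> strict_mono f \<Longrightarrow> monoseq (\<lambda>n. u (f n))"
  unfolding monoseq_def using strict_mono_less_eq by metis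

lemma strict_mono_monoseq_coords:
  fixes s :: "nat \<Rightarrow> nat \<Rightarrow> real"
  shows "\<exists>r. strict_mono r \<and> (\<forall>j<k. monoseq (\<lambda>n. s (r n) j))"
proof (induction k)
  case 0
  show ?case
    using strict_mono_id by blast
next
  case (Suc k)
  then obtain r where r: "strict_mono r" "\<forall>j<k. monoseq (\<lambda>n. s (r n) j)"
    by blast
  obtain f where f: "strict_mono f" "monoseq (\<lambda>n. s (r (f n)) k)"
    using seq_monosub[of "\<lambda>n. s (r n) k"] by blast
  have "monoseq (\<lambda>n. s (r (f n)) j)" if "j < k" for j
    using monoseq_comp_strict_mono[of "\<lambda>n. s (r n) j" f] r(2) that f(1) by simp
  moreover have "strict_mono (\<lambda>n. r (f n))"
    using strict_mono_o[OF r(1) f(1)] by (simp add: comp_def)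
  ultimately show ?case
    using f(2) by (intro exI[of _ "\<lambda>n. r (f n)"]) (auto simp: less_Suc_eq)
qed

lemma eventually_nearest_dist_gt:
  assumes k: "0 < k" and b: "b < nearest_dist k c x"
    and coords: "\<And>j. j < k \<Longrightarrow>
      (\<lambda>n. s n j) \<longlonglongrightarrow> c j \<or> filterlim (\<lambda>n. \<bar>s n j\<bar>) at_top sequentially"
  shows "\<forall>\<^sub>F n in sequentially. b < nearest_dist k (s n) x"
proof -
  have "\<forall>\<^sub>F n in sequentially. b < \<bar>x - s n j\<bar>" if j: "j < k" for j
    using coords[OF j]
  proof
    assume "(\<lambda>n. s n j) \<longlonglongrightarrow> c j"
    then have "(\<lambda>n. \<bar>x - s n j\<bar>) \<longlonglongrightarrow> \<bar>x - c j\<bar>"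
      by (intro tendsto_intros)
    moreover have "b < \<bar>x - c j\<bar>"
      using b nearest_dist_le[OF j, of c x] by linarith
    ultimately show ?thesis
      by (rule order_tendstoD)
  next
    assume "filterlim (\<lambda>n. \<bar>s n j\<bar>) at_top sequentially"
    then have "\<forall>\<^sub>F n in sequentially. \<bar>x\<bar> + b + 1 \<le> \<bar>s n j\<bar>"
      by (simp add: filterlim_at_top)
    then show ?thesis
      by eventually_elim linarith
  qed
  then have "\<forall>\<^sub>F n in sequentially. \<forall>j\<in>{..<k}. b < \<bar>x - s n j\<bar>"
    by (intro eventually_ball_finite) auto
  then show ?thesis
    by eventually_elim (simp add: nearest_dist_gt k)
qed

lemma nearest_dist_le_liminf:
  assumes k: "0 < k"
    and coords: "\<And>j. j < k \<Longrightarrow>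
      (\<lambda>n. s n j) \<longlonglongrightarrow> c j \<or> filterlim (\<lambda>n. \<bar>s n j\<bar>) at_top sequentially"
  shows "ennreal (nearest_dist k c x) \<le> liminf (\<lambda>n. ennreal (nearest_dist k (s n) x))"
  unfolding le_Liminf_iff
proof (intro allI impI)
  fix t assume t: "t < ennreal (nearest_dist k c x)"
  then obtain b where b: "t = ennreal b" "0 \<le> b"
    by (cases t) auto
  with t have "b < nearest_dist k c x"
    by (simp add: ennreal_less_iff)
  then have "\<forall>\<^sub>F n in sequentially. b < nearest_dist k (s n) x"
    using eventually_nearest_dist_gt[of k b c x s] k coords by blast
  then show "\<forall>\<^sub>F n in sequentially. t < ennreal (nearest_dist k (s n) x)"
    by eventually_elim (use b in \<open>auto intro: ennreal_lessI\<close>)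
qed

context real_distribution
begin

lemma quant_risk_minimizer:
  assumes int_x: "integrable M (\<lambda>x. x)" and k: "0 < k"
  obtains c where "\<And>y. quant_risk M k c \<le> quant_risk M k y"
proof -
  define G where "G y = (\<integral>\<^sup>+x. ennreal (nearest_dist k y x) \<partial>M)" for y
  obtain u where u: "\<And>n. u n \<in> range G" "u \<longlonglongrightarrow> Inf (range G)"
    using Inf_as_limit[of "range G"] by auto
  then have "\<forall>n. \<exists>y. u n = G y"
    by blast
  then obtain ys where ys: "\<And>n. u n = G (ys n)"
    by metis
  obtain r where r: "strict_mono r" "\<forall>j<k. monoseq (\<lambda>n. ys (r n) j)"
    using strict_mono_monoseq_coords by blast
  define c where "c j = lim (\<lambda>n. ys (r n) j)" for j
  have coords: "(\<lambda>n. ys (r n) j) \<longlonglongrightarrow> c j \<or> filterlim (\<lambda>n. \<bar>ys (r n) j\<bar>) at_top sequentially"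
    if "j < k" for j
    unfolding c_def using monoseq_tendsto_or_abs_at_top r(2) that by blast
  have "(\<lambda>n. G (ys (r n))) \<longlonglongrightarrow> Inf (range G)"
    using LIMSEQ_subseq_LIMSEQ[OF u(2) r(1)] by (simp add: ys comp_def)
  then have "liminf (\<lambda>n. G (ys (r n))) = Inf (range G)"
    by (intro lim_imp_Liminf) auto
  moreover have "G c \<le> (\<integral>\<^sup>+x. liminf (\<lambda>n. ennreal (nearest_dist k (ys (r n)) x)) \<partial>M)"
    unfolding G_def by (intro nn_integral_mono nearest_dist_le_liminf[OF k coords])
  moreover have "\<dots> \<le> liminf (\<lambda>n. G (ys (r n)))"
    unfolding G_def by (intro nn_integral_liminf) measurable
  ultimately have "G c \<le> Inf (range G)"
    by simp
  then have "G c \<le> G y" for y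
    by (meson Inf_lower order_trans rangeI)
  then show ?thesis
    by (intro that) (simp add: G_def nn_integral_nearest_dist[OF int_x k] quant_risk_nonneg[OF k])
qed

lemma W1_Pk_min_eq_quant_risk:
  assumes int_x: "integrable M (\<lambda>x. x)" and k: "0 < k"
    and c_min: "\<And>y. quant_risk M k c \<le> quant_risk M k y"
  shows "\<exists>\<nu>\<in>Pk k. W1 M \<nu> = ennreal (quant_risk M k c)"
    and "(INF \<nu>\<in>Pk k. W1 M \<nu>) = ennreal (quant_risk M k c)"
proof -
  have lower: "ennreal (quant_risk M k c) \<le> W1 M \<nu>" if \<nu>: "\<nu> \<in> Pk k" for \<nu>
  proof -
    obtain p where "ennreal (quant_risk M k p) \<le> W1 M \<nu>"
      using nn_integral_nearest_dist_le_W1[OF \<nu>, where \<mu>=M]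
      by (auto simp: nn_integral_nearest_dist[OF int_x k])
    then show ?thesis
      using c_min[of p] by (meson ennreal_leI order_trans)
  qed
  obtain \<nu> where \<nu>: "\<nu> \<in> Pk k" "W1 M \<nu> \<le> ennreal (quant_risk M k c)"
    using exists_Pk_W1_le_nearest_dist[OF k, of c] by (auto simp: nn_integral_nearest_dist[OF int_x k])
  with lower have W1_\<nu>: "W1 M \<nu> = ennreal (quant_risk M k c)"
    by (intro antisym) auto
  with \<nu>(1) show "\<exists>\<nu>\<in>Pk k. W1 M \<nu> = ennreal (quant_risk M k c)" ..
  show "(INF \<nu>\<in>Pk k. W1 M \<nu>) = ennreal (quant_risk M k c)"
    using \<nu>(1) W1_\<nu> lower by (intro antisym INF_greatest INF_lower2) auto
qed

end

section \<open>The optimal social cost\<close>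

lemma SC_nonneg: "0 < k \<Longrightarrow> 0 \<le> SC n x k y"
  unfolding SC_eq_nearest_dist by (intro mult_nonneg_nonneg sum_nonneg nearest_dist_nonneg) auto

lemma SC_le_add:
  assumes k: "0 < k" and close: "\<And>j. j < k \<Longrightarrow> \<bar>y j - y' j\<bar> \<le> e"
  shows "SC n x k y \<le> SC n x k y' + e"
proof (cases "n = 0")
  case True
  then show ?thesis
    using close[OF k] by (simp add: SC_def)
next
  case False
  have "nearest_dist k y (x i) \<le> nearest_dist k y' (x i) + e" for i
    using nearest_dist_le_add[OF k close, where x="x i" and x'="x i"] by simp
  then have "SC n x k y \<le> (1 / real n) * (\<Sum>i<n. nearest_dist k y' (x i) + e)"
    unfolding SC_eq_nearest_dist by (intro mult_left_mono sum_mono) auto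
  also have "\<dots> = SC n x k y' + e"
    using False by (simp add: SC_eq_nearest_dist sum.distrib field_simps)
  finally show ?thesis .
qed

lemma SC_opt_le_SC:
  assumes k: "0 < k"
  shows "SC_opt n x k \<le> SC n x k y"
proof -
  define y' where "y' j = (if j < k then y j else 0)" for j
  have "SC_opt n x k \<le> SC n x k y'"
    unfolding SC_opt_def using SC_nonneg[OF k]
    by (intro cINF_lower bdd_belowI2[where m=0]) (auto simp: y'_def)
  also have "\<dots> \<le> SC n x k y + 0"
    by (rule SC_le_add[OF k]) (simp add: y'_def)
  finally show ?thesis
    by simp
qed

lemma centers_nonempty: "{y. \<forall>j\<ge>k. y j = (0::real)} \<noteq> {}"
proof -
  have "(\<lambda>_. 0) \<in> {y. \<forall>j\<ge>k. y j = (0::real)}"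
    by simp
  then show ?thesis
    by blast
qed

lemma SC_opt_nonneg: "0 < k \<Longrightarrow> 0 \<le> SC_opt n x k"
  unfolding SC_opt_def using SC_nonneg by (intro cINF_greatest centers_nonempty)

definition rat_centers :: "nat \<Rightarrow> (nat \<Rightarrow> real) set" where
  "rat_centers k = (\<lambda>q j. if j < k then q j else 0) ` PiE {..<k} (\<lambda>_. \<rat>)"

lemma countable_rat_centers: "countable (rat_centers k)"
  unfolding rat_centers_def by (intro countable_image countable_PiE countable_rat) auto

lemma rat_centersI: "(\<And>j. q j \<in> \<rat>) \<Longrightarrow> (\<lambda>j. if j < k then q j else 0) \<in> rat_centers k"
  unfolding rat_centers_def by (intro image_eqI[of _ _ "restrict q {..<k}"]) auto

lemma Rats_approx:
  fixes y :: "nat \<Rightarrow> real"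
  assumes e: "0 < e"
  obtains q where "\<And>j. q j \<in> \<rat>" "\<And>j. \<bar>y j - q j\<bar> < e"
proof -
  have "\<exists>r. r \<in> \<rat> \<and> \<bar>y j - r\<bar> < e" for j
  proof -
    obtain r where "r \<in> \<rat>" "y j - e < r" "r < y j + e"
      using Rats_dense_in_real[of "y j - e" "y j + e"] e by auto
    then show ?thesis
      by (intro exI[of _ r]) auto
  qed
  then show ?thesis
    using that by metis
qed

lemma SC_opt_eq_INF_rat_centers:
  assumes k: "0 < k"
  shows "SC_opt n x k = (INF y\<in>rat_centers k. SC n x k y)"
proof (rule antisym)
  have bdd: "bdd_below ((\<lambda>y. SC n x k y) ` A)" for A
    using SC_nonneg[OF k] by (intro bdd_belowI2[where m=0])
  have nonempty: "rat_centers k \<noteq> {}"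
    using rat_centersI[of "\<lambda>_. 0" k] by auto
  have subset: "rat_centers k \<subseteq> {y. \<forall>j\<ge>k. y j = 0}"
    unfolding rat_centers_def by (intro image_subsetI) simp
  show "SC_opt n x k \<le> (INF y\<in>rat_centers k. SC n x k y)"
    unfolding SC_opt_def by (rule cINF_superset_mono[OF nonempty bdd subset order_refl])
  have "(INF y\<in>rat_centers k. SC n x k y) \<le> SC n x k y" for y
  proof (rule field_le_epsilon)
    fix e :: real assume e: "0 < e"
    obtain q where q: "\<And>j. q j \<in> \<rat>" "\<And>j. \<bar>y j - q j\<bar> < e"
      using Rats_approx[OF e] by metis
    have "SC n x k (\<lambda>j. if j < k then q j else 0) \<le> SC n x k y + e"
      using q(2) by (intro SC_le_add[OF k]) (simp add: abs_minus_commute less_imp_le)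
    with rat_centersI[OF q(1)] show "(INF y\<in>rat_centers k. SC n x k y) \<le> SC n x k y + e"
      by (rule cINF_lower2[OF bdd])
  qed
  then show "(INF y\<in>rat_centers k. SC n x k y) \<le> SC_opt n x k"
    unfolding SC_opt_def by (intro cINF_greatest centers_nonempty)
qed

lemma borel_measurable_SC_opt:
  assumes k: "0 < k" and [measurable]: "\<And>i. X i \<in> borel_measurable M"
  shows "(\<lambda>\<omega>. SC_opt n (\<lambda>i. X i \<omega>) k) \<in> borel_measurable M"
  unfolding SC_opt_eq_INF_rat_centers[OF k] SC_eq_nearest_dist
  by (intro borel_measurable_cINF_real countable_rat_centers) measurable

section \<open>Truncation and finite nets\<close>

lemma finite_net_interval:
  fixes R \<delta> :: real
  assumes \<delta>: "0 < \<delta>"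
  obtains P where "finite P" "\<And>t. t \<in> {-R..R} \<Longrightarrow> \<exists>p\<in>P. \<bar>t - p\<bar> \<le> \<delta>"
proof -
  define N where "N = \<lceil>R / \<delta>\<rceil>"
  have "\<exists>p\<in>(\<lambda>i. \<delta> * of_int i) ` {-N..N}. \<bar>t - p\<bar> \<le> \<delta>" if t: "t \<in> {-R..R}" for t
  proof -
    define i where "i = \<lfloor>t / \<delta>\<rfloor>"
    have floor: "of_int i \<le> t / \<delta>" "t / \<delta> < of_int i + 1"
      unfolding i_def by linarith+
    moreover have "t / \<delta> \<le> R / \<delta>" "- R / \<delta> \<le> t / \<delta>"
      using t \<delta> by (intro divide_right_mono; simp)+
    ultimately have "i \<le> N" "- i \<le> N"
      unfolding N_def le_ceiling_iff by simp_all
    moreover have "\<delta> * of_int i \<le> t" "t < \<delta> * of_int i + \<delta>"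
      using floor \<delta> by (simp_all add: field_simps)
    then have "\<bar>t - \<delta> * of_int i\<bar> \<le> \<delta>"
      by (simp add: abs_le_iff)
    ultimately show ?thesis
      by force
  qed
  then show ?thesis
    by (intro that[of "(\<lambda>i. \<delta> * of_int i) ` {-N..N}"]) auto
qed

lemma finite_net_cube:
  fixes R \<delta> :: real and k :: nat
  assumes "0 < \<delta>"
  obtains G where "finite G"
    "\<And>y. \<forall>j<k. \<bar>y j\<bar> \<le> R \<Longrightarrow> \<exists>g\<in>G. \<forall>j<k. \<bar>y j - g j\<bar> \<le> \<delta>"
proof -
  obtain P where P: "finite P" "\<And>t. t \<in> {-R..R} \<Longrightarrow> \<exists>p\<in>P. \<bar>t - p\<bar> \<le> \<delta>"
    using finite_net_interval[OF assms] by blast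
  have "\<exists>g\<in>PiE {..<k} (\<lambda>_. P). \<forall>j<k. \<bar>y j - g j\<bar> \<le> \<delta>" if y: "\<forall>j<k. \<bar>y j\<bar> \<le> R" for y
  proof -
    have close: "\<exists>p. p \<in> P \<and> \<bar>y j - p\<bar> \<le> \<delta>" if "j < k" for j
      using P(2)[of "y j"] y[rule_format, OF that] by (auto simp: abs_le_iff)
    have "(SOME p. p \<in> P \<and> \<bar>y j - p\<bar> \<le> \<delta>) \<in> P \<and> \<bar>y j - (SOME p. p \<in> P \<and> \<bar>y j - p\<bar> \<le> \<delta>)\<bar> \<le> \<delta>"
      if "j < k" for j
      using close[OF that] by (rule someI_ex)
    then show ?thesis
      by (intro bexI[of _ "\<lambda>j\<in>{..<k}. SOME p. p \<in> P \<and> \<bar>y j - p\<bar> \<le> \<delta>"]) auto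
  qed
  then show ?thesis
    using P(1) by (intro that[of "PiE {..<k} (\<lambda>_. P)"] finite_PiE) auto
qed

context real_distribution
begin

lemma exists_integral_dist_clamp_less:
  assumes int_x: "integrable M (\<lambda>x. x)" and e: "0 < e"
  obtains R where "0 \<le> R" "(\<integral>x. \<bar>x - clamp (-R) R x\<bar> \<partial>M) < e"
proof -
  have "(\<lambda>m. \<integral>x. \<bar>x - clamp (- real m) (real m) x\<bar> \<partial>M) \<longlonglongrightarrow> (\<integral>x. 0 \<partial>M)"
  proof (rule integral_dominated_convergence[where w="\<lambda>x. \<bar>x\<bar>"])
    show "integrable M (\<lambda>x. \<bar>x\<bar>)"
      using int_x by auto
    show "AE x in M. (\<lambda>m. \<bar>x - clamp (- real m) (real m) x\<bar>) \<longlonglongrightarrow> 0"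
    proof (intro AE_I2 tendsto_eventually eventually_sequentiallyI)
      fix x :: real and m :: nat assume "nat \<lceil>\<bar>x\<bar>\<rceil> \<le> m"
      then have "\<bar>x\<bar> \<le> real m"
        by linarith
      then show "\<bar>x - clamp (- real m) (real m) x\<bar> = 0"
        by (simp add: clamp_real abs_le_iff)
    qed
    show "AE x in M. norm \<bar>x - clamp (- real m) (real m) x\<bar> \<le> \<bar>x\<bar>" for m
      using abs_diff_clamp_le[of "real m"] by (intro AE_I2) simp
  qed measurable
  then have "\<forall>\<^sub>F m in sequentially. (\<integral>x. \<bar>x - clamp (- real m) (real m) x\<bar> \<partial>M) < e"
    using e by (simp add: order_tendstoD(2))
  then obtain m where "(\<integral>x. \<bar>x - clamp (- real m) (real m) x\<bar> \<partial>M) < e"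
    by (meson eventually_sequentially order.refl)
  then show ?thesis
    by (intro that[of "real m"]) simp_all
qed

lemma integrable_nearest_dist_clamp:
  assumes "0 < k" "0 \<le> R"
  shows "integrable M (\<lambda>x. nearest_dist k y (clamp (-R) R x))"
proof (rule integrable_const_bound[where B="R + \<bar>y 0\<bar>"])
  show "AE x in M. norm (nearest_dist k y (clamp (-R) R x)) \<le> R + \<bar>y 0\<bar>"
  proof (rule AE_I2)
    fix x
    show "norm (nearest_dist k y (clamp (-R) R x)) \<le> R + \<bar>y 0\<bar>"
      using nearest_dist_le_abs[OF assms(1), of y "clamp (-R) R x"]
        nearest_dist_nonneg[OF assms(1), of y "clamp (-R) R x"] abs_clamp_le[OF assms(2), of x]
      by simp
  qed
qed measurable

lemma quant_risk_le_clamped: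
  assumes int_x: "integrable M (\<lambda>x. x)" and k: "0 < k" and R: "0 \<le> R"
  shows "quant_risk M k y
    \<le> (\<integral>x. nearest_dist k y (clamp (-R) R x) \<partial>M) + (\<integral>x. \<bar>x - clamp (-R) R x\<bar> \<partial>M)"
proof -
  have int_diff: "integrable M (\<lambda>x. \<bar>x - clamp (-R) R x\<bar>)"
  proof (rule Bochner_Integration.integrable_bound[where f="\<lambda>x. \<bar>x\<bar>"])
    show "integrable M (\<lambda>x. \<bar>x\<bar>)"
      using int_x by (rule integrable_abs)
    show "AE x in M. norm \<bar>x - clamp (-R) R x\<bar> \<le> norm \<bar>x\<bar>"
      using abs_diff_clamp_le[OF R] by (intro AE_I2) simp
  qed measurable
  have "nearest_dist k y x \<le> nearest_dist k y (clamp (-R) R x) + \<bar>x - clamp (-R) R x\<bar>" for x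
    using nearest_dist_le_add[OF k, of y y 0 x "clamp (-R) R x"] by simp
  then have "quant_risk M k y \<le> (\<integral>x. nearest_dist k y (clamp (-R) R x) + \<bar>x - clamp (-R) R x\<bar> \<partial>M)"
    unfolding quant_risk_def
    by (intro integral_mono integrable_nearest_dist int_x k
        Bochner_Integration.integrable_add integrable_nearest_dist_clamp R int_diff)
  then show ?thesis
    by (simp add: integrable_nearest_dist_clamp[OF k R] int_diff)
qed

end

lemma SC_opt_ge_net:
  assumes k: "0 < k" and n: "0 < n" and R: "0 \<le> R" and G: "finite G"
    and net: "\<And>y. \<forall>j<k. \<bar>y j\<bar> \<le> R \<Longrightarrow> \<exists>g\<in>G. \<forall>j<k. \<bar>y j - g j\<bar> \<le> \<delta>"
    and lower: "\<And>g. g \<in> G \<Longrightarrow> m \<le> a g"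
  shows "m - \<delta> - (\<Sum>g\<in>G. \<bar>(1 / real n) * (\<Sum>i<n. nearest_dist k g (clamp (-R) R (x i))) - a g\<bar>)
    \<le> SC_opt n x k"
  unfolding SC_opt_def
proof (rule cINF_greatest[OF centers_nonempty])
  fix y :: "nat \<Rightarrow> real"
  let ?mean = "\<lambda>g. (1 / real n) * (\<Sum>i<n. nearest_dist k g (clamp (-R) R (x i)))"
  obtain g where g: "g \<in> G" "\<And>j. j < k \<Longrightarrow> \<bar>clamp (-R) R (y j) - g j\<bar> \<le> \<delta>"
    using net[of "\<lambda>j. clamp (-R) R (y j)"] abs_clamp_le[OF R] by blast
  have g_close: "\<And>j. j < k \<Longrightarrow> \<bar>g j - clamp (-R) R (y j)\<bar> \<le> \<delta>"
    using g(2) by (simp add: abs_minus_commute)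
  have "nearest_dist k g (clamp (-R) R (x i)) \<le> nearest_dist k y (x i) + \<delta>" for i
  proof -
    have "nearest_dist k g (clamp (-R) R (x i))
        \<le> nearest_dist k (\<lambda>j. clamp (-R) R (y j)) (clamp (-R) R (x i)) + 0 + \<delta>"
      using nearest_dist_le_add[OF k g_close, where x="clamp (-R) R (x i)" and x'="clamp (-R) R (x i)"]
      by simp
    also have "nearest_dist k (\<lambda>j. clamp (-R) R (y j)) (clamp (-R) R (x i)) \<le> nearest_dist k y (x i)"
      by (rule nearest_dist_mono[OF k]) (rule abs_clamp_diff_le)
    finally show ?thesis
      by simp
  qed
  then have "?mean g \<le> (1 / real n) * (\<Sum>i<n. nearest_dist k y (x i) + \<delta>)"
    by (intro mult_left_mono sum_mono) auto
  also have "\<dots> = SC n x k y + \<delta>"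
    using n by (simp add: SC_eq_nearest_dist sum.distrib field_simps)
  finally have "?mean g \<le> SC n x k y + \<delta>" .
  moreover have "\<bar>?mean g - a g\<bar> \<le> (\<Sum>g\<in>G. \<bar>?mean g - a g\<bar>)"
    by (rule member_le_sum[OF g(1)]) (simp_all add: G)
  ultimately show "m - \<delta> - (\<Sum>g\<in>G. \<bar>?mean g - a g\<bar>) \<le> SC n x k y"
    using lower[OF g(1)] by linarith
qed

section \<open>Law of large numbers\<close>

lemma (in prob_space) indep_vars_indep_var:
  assumes indep: "indep_vars M' X I" and "i \<in> I" "j \<in> I" "i \<noteq> j"
  shows "indep_var (M' i) (X i) (M' j) (X j)"
proof -
  have "indep_var (PiM {i} M') (\<lambda>\<omega>. restrict (\<lambda>i. X i \<omega>) {i}) (PiM {j} M') (\<lambda>\<omega>. restrict (\<lambda>i. X i \<omega>) {j})"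
    using assms by (intro indep_var_restrict[OF indep]) auto
  then have "indep_var (M' i) ((\<lambda>f. f i) \<circ> (\<lambda>\<omega>. restrict (\<lambda>i. X i \<omega>) {i}))
      (M' j) ((\<lambda>f. f j) \<circ> (\<lambda>\<omega>. restrict (\<lambda>i. X i \<omega>) {j}))"
    by (rule indep_var_compose) (simp_all add: measurable_component_singleton)
  then show ?thesis
    by (simp add: comp_def)
qed

lemma (in prob_space) expectation_square_sum_le:
  fixes Y :: "nat \<Rightarrow> 'a \<Rightarrow> real"
  assumes indep: "indep_vars (\<lambda>_. borel) Y UNIV" and [measurable]: "\<And>i. Y i \<in> borel_measurable M"
    and bounded: "\<And>i \<omega>. \<bar>Y i \<omega>\<bar> \<le> B" and centered: "\<And>i. expectation (Y i) = 0"
  shows "expectation (\<lambda>\<omega>. (\<Sum>i<n. Y i \<omega>)\<^sup>2) \<le> real n * B\<^sup>2"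
proof -
  have int: "integrable M (Y i)" for i
    using bounded by (intro integrable_const_bound[where B=B] AE_I2) auto
  have "\<bar>Y i \<omega> * Y j \<omega>\<bar> \<le> B\<^sup>2" for i j \<omega>
    unfolding abs_mult power2_eq_square using bounded by (meson abs_ge_zero mult_mono order_trans)
  then have int2: "integrable M (\<lambda>\<omega>. Y i \<omega> * Y j \<omega>)" for i j
    by (intro integrable_const_bound[where B="B\<^sup>2"] AE_I2) auto
  have square_bounded: "(Y i \<omega>)\<^sup>2 \<le> B\<^sup>2" for i \<omega>
    using power_mono[OF bounded[of i \<omega>] abs_ge_zero[of "Y i \<omega>"], of 2] by simp
  have products: "expectation (\<lambda>\<omega>. Y i \<omega> * Y j \<omega>) = (if j = i then expectation (\<lambda>\<omega>. (Y i \<omega>)\<^sup>2) else 0)"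
    for i j
    using indep_var_lebesgue_integral[OF indep_vars_indep_var[OF indep, of i j] int int] centered
    by (simp add: power2_eq_square)
  have "expectation (\<lambda>\<omega>. (\<Sum>i<n. Y i \<omega>)\<^sup>2) = (\<Sum>i<n. \<Sum>j<n. expectation (\<lambda>\<omega>. Y i \<omega> * Y j \<omega>))"
    by (simp add: power2_eq_square sum_product int2)
  also have "\<dots> = (\<Sum>i<n. expectation (\<lambda>\<omega>. (Y i \<omega>)\<^sup>2))"
    by (simp add: products)
  also have "\<dots> \<le> (\<Sum>i<n. B\<^sup>2)"
    using int2 square_bounded by (intro sum_mono integral_le_const AE_I2) (simp_all add: power2_eq_square)
  finally show ?thesis
    by simp
qed

lemma (in prob_space) square_expectation_abs_le:
  fixes Z :: "'a \<Rightarrow> real"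
  assumes "integrable M Z" "integrable M (\<lambda>\<omega>. (Z \<omega>)\<^sup>2)"
  shows "(expectation (\<lambda>\<omega>. \<bar>Z \<omega>\<bar>))\<^sup>2 \<le> expectation (\<lambda>\<omega>. (Z \<omega>)\<^sup>2)"
  using variance_eq[of "\<lambda>\<omega>. \<bar>Z \<omega>\<bar>"] variance_positive[of "\<lambda>\<omega>. \<bar>Z \<omega>\<bar>"] assms by simp

text \<open>The mean has second moment at most \<open>B\<^sup>2 / n\<close>.\<close>
lemma (in prob_space) expectation_abs_mean_tendsto_0:
  fixes Y :: "nat \<Rightarrow> 'a \<Rightarrow> real"
  assumes indep: "indep_vars (\<lambda>_. borel) Y UNIV" and [measurable]: "\<And>i. Y i \<in> borel_measurable M"
    and bounded: "\<And>i \<omega>. \<bar>Y i \<omega>\<bar> \<le> B" and centered: "\<And>i. expectation (Y i) = 0"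
  shows "(\<lambda>n. expectation (\<lambda>\<omega>. \<bar>(1 / real n) * (\<Sum>i<n. Y i \<omega>)\<bar>)) \<longlonglongrightarrow> 0"
proof (rule tendsto_sandwich[of "\<lambda>_. 0" _ _ "\<lambda>n. \<bar>B\<bar> / sqrt (real n)"])
  have int: "integrable M (Y i)" for i
    using bounded by (intro integrable_const_bound[where B=B] AE_I2) auto
  have "\<bar>Y i \<omega> * Y j \<omega>\<bar> \<le> B\<^sup>2" for i j \<omega>
    unfolding abs_mult power2_eq_square using bounded by (meson abs_ge_zero mult_mono order_trans)
  then have "integrable M (\<lambda>\<omega>. Y i \<omega> * Y j \<omega>)" for i j
    by (intro integrable_const_bound[where B="B\<^sup>2"] AE_I2) auto
  then have int2: "integrable M (\<lambda>\<omega>. (\<Sum>i<n. Y i \<omega>)\<^sup>2)" for n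
    unfolding power2_eq_square sum_product by simp
  have "expectation (\<lambda>\<omega>. \<bar>(1 / real n) * (\<Sum>i<n. Y i \<omega>)\<bar>) \<le> \<bar>B\<bar> / sqrt (real n)" if n: "0 < n" for n
  proof -
    have "integrable M (\<lambda>\<omega>. (1 / real n) * (\<Sum>i<n. Y i \<omega>))"
      using int by simp
    moreover have "integrable M (\<lambda>\<omega>. ((1 / real n) * (\<Sum>i<n. Y i \<omega>))\<^sup>2)"
      unfolding power_mult_distrib by (intro integrable_mult_right int2)
    ultimately have "(expectation (\<lambda>\<omega>. \<bar>(1 / real n) * (\<Sum>i<n. Y i \<omega>)\<bar>))\<^sup>2
        \<le> expectation (\<lambda>\<omega>. ((1 / real n) * (\<Sum>i<n. Y i \<omega>))\<^sup>2)"
      by (rule square_expectation_abs_le)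
    also have "\<dots> = expectation (\<lambda>\<omega>. (\<Sum>i<n. Y i \<omega>)\<^sup>2) / (real n)\<^sup>2"
      by (simp add: power_mult_distrib power_divide)
    also have "\<dots> \<le> real n * B\<^sup>2 / (real n)\<^sup>2"
      by (intro divide_right_mono expectation_square_sum_le[OF indep _ bounded centered]) auto
    also have "\<dots> = B\<^sup>2 / real n"
      using n by (simp add: power2_eq_square)
    finally show ?thesis
      by (auto dest!: real_le_rsqrt simp: real_sqrt_divide)
  qed
  then show "\<forall>\<^sub>F n in sequentially. expectation (\<lambda>\<omega>. \<bar>(1 / real n) * (\<Sum>i<n. Y i \<omega>)\<bar>) \<le> \<bar>B\<bar> / sqrt (real n)"
    by (intro eventually_mono[OF eventually_gt_at_top[of 0]])
  show "(\<lambda>n. \<bar>B\<bar> / sqrt (real n)) \<longlonglongrightarrow> 0"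
    by (intro tendsto_divide_0[OF tendsto_const] filterlim_at_top_imp_at_infinity filterlim_compose[OF sqrt_at_top filterlim_real_sequentially])
qed auto

locale iid_sample = prob_space M for M :: "'a measure" +
  fixes \<mu> :: "real measure" and X :: "nat \<Rightarrow> 'a \<Rightarrow> real"
  assumes measurable_X[measurable]: "\<And>i. X i \<in> borel_measurable M"
    and indep_X: "indep_vars (\<lambda>_. borel) X UNIV"
    and distr_X: "\<And>i. distr M borel (X i) = \<mu>"
    and first_moment: "integrable \<mu> (\<lambda>x. x)"
begin

sublocale law: real_distribution \<mu>
  using real_distribution_distr[OF measurable_X[of 0]] by (simp add: distr_X)

lemma integral_X:
  fixes g :: "real \<Rightarrow> real"
  shows "g \<in> borel_measurable borel \<Longrightarrow> expectation (\<lambda>\<omega>. g (X i \<omega>)) = (\<integral>x. g x \<partial>\<mu>)"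
  using integral_distr[OF measurable_X[of i], of g] by (simp add: distr_X)

lemma integrable_X:
  fixes g :: "real \<Rightarrow> real"
  shows "g \<in> borel_measurable borel \<Longrightarrow> integrable \<mu> g \<Longrightarrow> integrable M (\<lambda>\<omega>. g (X i \<omega>))"
  using integrable_distr_eq[OF measurable_X[of i], of g] by (simp add: distr_X)

lemma integrable_SC:
  assumes k: "0 < k"
  shows "integrable M (\<lambda>\<omega>. SC n (\<lambda>i. X i \<omega>) k y)"
proof -
  have "integrable M (\<lambda>\<omega>. nearest_dist k y (X i \<omega>))" for i
    by (rule integrable_X[OF _ law.integrable_nearest_dist[OF first_moment k]]) measurable
  then show ?thesis
    unfolding SC_eq_nearest_dist by simp
qed

lemma integrable_SC_opt:
  assumes k: "0 < k"
  shows "integrable M (\<lambda>\<omega>. SC_opt n (\<lambda>i. X i \<omega>) k)"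
proof (rule Bochner_Integration.integrable_bound[OF integrable_SC[OF k, of n "\<lambda>_. 0"]])
  show "(\<lambda>\<omega>. SC_opt n (\<lambda>i. X i \<omega>) k) \<in> borel_measurable M"
    using borel_measurable_SC_opt[OF k measurable_X] .
  show "AE \<omega> in M. norm (SC_opt n (\<lambda>i. X i \<omega>) k) \<le> norm (SC n (\<lambda>i. X i \<omega>) k (\<lambda>_. 0))"
    using SC_opt_nonneg[OF k] SC_opt_le_SC[OF k] SC_nonneg[OF k] by (intro AE_I2) simp
qed

lemma expectation_SC_opt_le:
  assumes k: "0 < k" and n: "0 < n"
  shows "expectation (\<lambda>\<omega>. SC_opt n (\<lambda>i. X i \<omega>) k) \<le> quant_risk \<mu> k y"
proof -
  have int: "integrable M (\<lambda>\<omega>. nearest_dist k y (X i \<omega>))" for i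
    by (rule integrable_X[OF _ law.integrable_nearest_dist[OF first_moment k]]) measurable
  have mean: "expectation (\<lambda>\<omega>. nearest_dist k y (X i \<omega>)) = quant_risk \<mu> k y" for i
    unfolding quant_risk_def by (rule integral_X) measurable
  have "expectation (\<lambda>\<omega>. SC_opt n (\<lambda>i. X i \<omega>) k) \<le> expectation (\<lambda>\<omega>. SC n (\<lambda>i. X i \<omega>) k y)"
    by (intro integral_mono integrable_SC_opt integrable_SC k SC_opt_le_SC)
  also have "\<dots> = quant_risk \<mu> k y"
    using n by (simp add: SC_eq_nearest_dist int mean)
  finally show ?thesis .
qed

lemma expectation_abs_mean_dev_tendsto_0:
  assumes [measurable]: "h \<in> borel_measurable borel" and bounded: "\<And>x. \<bar>h x\<bar> \<le> B"
  shows "(\<lambda>n. expectation (\<lambda>\<omega>. \<bar>(1 / real n) * (\<Sum>i<n. h (X i \<omega>)) - (\<integral>x. h x \<partial>\<mu>)\<bar>)) \<longlonglongrightarrow> 0"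
proof -
  have int_h: "integrable \<mu> h"
    using bounded by (intro law.integrable_const_bound[where B=B] AE_I2) auto
  have "\<bar>\<integral>x. h x \<partial>\<mu>\<bar> \<le> B"
    using bounded int_h by (intro law.integral_le_const order_trans[OF integral_abs_bound]) auto
  then have "(\<lambda>n. expectation (\<lambda>\<omega>. \<bar>(1 / real n) * (\<Sum>i<n. h (X i \<omega>) - (\<integral>x. h x \<partial>\<mu>))\<bar>)) \<longlonglongrightarrow> 0"
  proof (intro expectation_abs_mean_tendsto_0)
    show "indep_vars (\<lambda>_. borel) (\<lambda>i \<omega>. h (X i \<omega>) - (\<integral>x. h x \<partial>\<mu>)) UNIV"
      by (rule indep_vars_compose2[OF indep_X]) measurable
    show "\<bar>h (X i \<omega>) - (\<integral>x. h x \<partial>\<mu>)\<bar> \<le> 2 * B" if "\<bar>\<integral>x. h x \<partial>\<mu>\<bar> \<le> B" for i \<omega>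
      using that bounded[of "X i \<omega>"] by linarith
    show "expectation (\<lambda>\<omega>. h (X i \<omega>) - (\<integral>x. h x \<partial>\<mu>)) = 0" for i
      using integrable_X[OF _ int_h] by (simp add: integral_X prob_space)
  qed measurable
  moreover have "\<forall>\<^sub>F n in sequentially.
      expectation (\<lambda>\<omega>. \<bar>(1 / real n) * (\<Sum>i<n. h (X i \<omega>) - (\<integral>x. h x \<partial>\<mu>))\<bar>)
      = expectation (\<lambda>\<omega>. \<bar>(1 / real n) * (\<Sum>i<n. h (X i \<omega>)) - (\<integral>x. h x \<partial>\<mu>)\<bar>)"
    using eventually_gt_at_top[of "0::nat"] by eventually_elim (simp add: sum_subtractf diff_divide_distrib)
  ultimately show ?thesis
    by (rule Lim_transform_eventually)
qed

lemma expectation_SC_opt_ge_net: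
  assumes k: "0 < k" and n: "0 < n" and R: "0 \<le> R" and G: "finite G"
    and net: "\<And>y. \<forall>j<k. \<bar>y j\<bar> \<le> R \<Longrightarrow> \<exists>g\<in>G. \<forall>j<k. \<bar>y j - g j\<bar> \<le> \<delta>"
    and lower: "\<And>g. g \<in> G \<Longrightarrow> m \<le> (\<integral>x. nearest_dist k g (clamp (-R) R x) \<partial>\<mu>)"
  shows "m - \<delta> - (\<Sum>g\<in>G. expectation (\<lambda>\<omega>. \<bar>(1 / real n) * (\<Sum>i<n. nearest_dist k g (clamp (-R) R (X i \<omega>)))
      - (\<integral>x. nearest_dist k g (clamp (-R) R x) \<partial>\<mu>)\<bar>))
    \<le> expectation (\<lambda>\<omega>. SC_opt n (\<lambda>i. X i \<omega>) k)"
proof -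
  let ?dev = "\<lambda>g \<omega>. \<bar>(1 / real n) * (\<Sum>i<n. nearest_dist k g (clamp (-R) R (X i \<omega>)))
      - (\<integral>x. nearest_dist k g (clamp (-R) R x) \<partial>\<mu>)\<bar>"
  have int: "integrable M (?dev g)" for g
    using integrable_X[OF _ law.integrable_nearest_dist_clamp[OF k R]] by simp
  have "m - \<delta> - (\<Sum>g\<in>G. expectation (?dev g)) = expectation (\<lambda>\<omega>. m - \<delta> - (\<Sum>g\<in>G. ?dev g \<omega>))"
    using int by (simp add: prob_space)
  also have "\<dots> \<le> expectation (\<lambda>\<omega>. SC_opt n (\<lambda>i. X i \<omega>) k)"
    using int SC_opt_ge_net[OF k n R G net lower] by (intro integral_mono integrable_SC_opt k) auto
  finally show ?thesis .
qed

lemma eventually_expectation_SC_opt_gt: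
  assumes k: "0 < k" and c_min: "\<And>y. quant_risk \<mu> k c \<le> quant_risk \<mu> k y" and e: "0 < e"
  shows "\<forall>\<^sub>F n in sequentially. quant_risk \<mu> k c - e < expectation (\<lambda>\<omega>. SC_opt n (\<lambda>i. X i \<omega>) k)"
proof -
  obtain R where R: "0 \<le> R" and tail: "(\<integral>x. \<bar>x - clamp (-R) R x\<bar> \<partial>\<mu>) < e / 3"
    using law.exists_integral_dist_clamp_less[OF first_moment, of "e / 3"] e by auto
  obtain G where G: "finite G"
    and net: "\<And>y. \<forall>j<k. \<bar>y j\<bar> \<le> R \<Longrightarrow> \<exists>g\<in>G. \<forall>j<k. \<bar>y j - g j\<bar> \<le> e / 3"
    using finite_net_cube[where \<delta>="e / 3" and R=R and k=k] e by (metis divide_pos_pos zero_less_numeral)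
  define f where "f g x = nearest_dist k g (clamp (-R) R x)" for g x
  have [measurable]: "f g \<in> borel_measurable borel" for g
    unfolding f_def by measurable
  have f_bounded: "\<bar>f g x\<bar> \<le> R + \<bar>g 0\<bar>" for g x
    using nearest_dist_le_abs[OF k, of g "clamp (-R) R x"] nearest_dist_nonneg[OF k, of g "clamp (-R) R x"]
      abs_clamp_le[OF R, of x]
    unfolding f_def by simp
  have mean_f: "quant_risk \<mu> k c - e / 3 \<le> (\<integral>x. f g x \<partial>\<mu>)" for g
    using law.quant_risk_le_clamped[OF first_moment k R, of g] c_min[of g] tail unfolding f_def by linarith
  have "(\<lambda>n. expectation (\<lambda>\<omega>. \<bar>(1 / real n) * (\<Sum>i<n. f g (X i \<omega>)) - (\<integral>x. f g x \<partial>\<mu>)\<bar>)) \<longlonglongrightarrow> 0" for g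
    by (rule expectation_abs_mean_dev_tendsto_0[OF _ f_bounded]) measurable
  then have "(\<lambda>n. \<Sum>g\<in>G. expectation (\<lambda>\<omega>. \<bar>(1 / real n) * (\<Sum>i<n. f g (X i \<omega>)) - (\<integral>x. f g x \<partial>\<mu>)\<bar>))
      \<longlonglongrightarrow> 0"
    by (rule tendsto_null_sum)
  then have "\<forall>\<^sub>F n in sequentially.
      (\<Sum>g\<in>G. expectation (\<lambda>\<omega>. \<bar>(1 / real n) * (\<Sum>i<n. f g (X i \<omega>)) - (\<integral>x. f g x \<partial>\<mu>)\<bar>)) < e / 3"
    using e by (intro order_tendstoD(2)) auto
  then show ?thesis
    using eventually_gt_at_top[of "0::nat"]
  proof eventually_elim
    case (elim n)
    have "quant_risk \<mu> k c - e / 3 - e / 3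
        - (\<Sum>g\<in>G. expectation (\<lambda>\<omega>. \<bar>(1 / real n) * (\<Sum>i<n. f g (X i \<omega>)) - (\<integral>x. f g x \<partial>\<mu>)\<bar>))
        \<le> expectation (\<lambda>\<omega>. SC_opt n (\<lambda>i. X i \<omega>) k)"
      unfolding f_def by (rule expectation_SC_opt_ge_net[OF k elim(2) R G net]) (simp_all add: mean_f[unfolded f_def])
    then show ?case
      using elim(1) by linarith
  qed
qed

lemma expectation_SC_opt_tendsto:
  assumes k: "0 < k" and c_min: "\<And>y. quant_risk \<mu> k c \<le> quant_risk \<mu> k y"
  shows "(\<lambda>n. expectation (\<lambda>\<omega>. SC_opt n (\<lambda>i. X i \<omega>) k)) \<longlonglongrightarrow> quant_risk \<mu> k c"
proof (rule order_tendstoI)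
  fix a assume "a < quant_risk \<mu> k c"
  then show "\<forall>\<^sub>F n in sequentially. a < expectation (\<lambda>\<omega>. SC_opt n (\<lambda>i. X i \<omega>) k)"
    using eventually_expectation_SC_opt_gt[OF k c_min, of "quant_risk \<mu> k c - a"] by simp
next
  fix a assume a: "quant_risk \<mu> k c < a"
  show "\<forall>\<^sub>F n in sequentially. expectation (\<lambda>\<omega>. SC_opt n (\<lambda>i. X i \<omega>) k) < a"
    using eventually_gt_at_top[of "0::nat"]
  proof eventually_elim
    case (elim n)
    show ?case
      using expectation_SC_opt_le[OF k elim, of c] a by linarith
  qed
qed

end

lemma emeasure_density_lborel_singleton:
  assumes "f \<in> borel_measurable borel"
  shows "emeasure (density lborel f) {x} = 0"
proof -
  have "emeasure (density lborel f) {x} = (\<integral>\<^sup>+y. f y * indicator {x} y \<partial>lborel)"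
    using assms by (intro emeasure_density) auto
  also have "\<dots> = 0"
    by (intro nn_integral_null_set finite_imp_null_set_lborel) simp
  finally show ?thesis .
qed

theorem lemma1:
  fixes \<mu> :: "real measure" and \<rho> :: "real \<Rightarrow> real" and I :: "real set"
    and M :: "'a measure" and X :: "nat \<Rightarrow> 'a \<Rightarrow> real" and k :: nat
  assumes prob: "prob_space \<mu>"
    and dens: "\<mu> = density lborel (\<lambda>x. ennreal (\<rho> x))"
    and rho_meas: "\<rho> \<in> borel_measurable borel"
    and rho_nonneg: "\<And>x. \<rho> x \<ge> 0"
    and supp_interval: "is_interval I"
    and supp_out: "\<And>x. x \<notin> I \<Longrightarrow> \<rho> x = 0"
    and supp_pos: "\<And>x. x \<in> interior I \<Longrightarrow> \<rho> x > 0"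
    and rho_diff: "\<rho> differentiable_on I"
    and moment: "integrable \<mu> (\<lambda>x. x)"
    and M: "prob_space M"
    and X_meas: "\<And>i. X i \<in> borel_measurable M"
    and X_indep: "prob_space.indep_vars M (\<lambda>_. borel) X UNIV"
    and X_law: "\<And>i. distr M borel (X i) = \<mu>"
    and k: "k \<ge> 1"
  shows "(\<exists>\<nu> \<in> Pk k. W1 \<mu> \<nu> = (INF m \<in> Pk k. W1 \<mu> m))
    \<and> (\<forall>\<nu> \<in> Pk k. W1 \<mu> \<nu> = (INF m \<in> Pk k. W1 \<mu> m) \<longrightarrow>
         W1 \<mu> \<nu> < \<infinity> \<and>
         ((\<lambda>n. integral\<^sup>L M (\<lambda>\<omega>. SC_opt n (\<lambda>i. X i \<omega>) k))
            \<longlonglongrightarrow> enn2real (W1 \<mu> \<nu>)))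
    \<and> (\<forall>\<^sub>F n in sequentially. integral\<^sup>L M (\<lambda>\<omega>. SC_opt n (\<lambda>i. X i \<omega>) k) > 0)"
proof -
  interpret iid_sample M \<mu> X
    by (intro iid_sample.intro M iid_sample_axioms.intro X_meas X_indep X_law moment)
  have k: "0 < k"
    using k by simp
  have atomless: "emeasure \<mu> {x} = 0" for x
    unfolding dens by (rule emeasure_density_lborel_singleton) (use rho_meas in auto)
  obtain c where c_min: "\<And>y. quant_risk \<mu> k c \<le> quant_risk \<mu> k y"
    using law.quant_risk_minimizer[OF first_moment k] by blast
  have pos: "0 < quant_risk \<mu> k c"
    by (rule law.quant_risk_pos[OF first_moment k atomless])
  have lim: "(\<lambda>n. expectation (\<lambda>\<omega>. SC_opt n (\<lambda>i. X i \<omega>) k)) \<longlonglongrightarrow> quant_risk \<mu> k c"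
    by (rule expectation_SC_opt_tendsto[OF k c_min])
  note W1_min = law.W1_Pk_min_eq_quant_risk[OF first_moment k c_min]
  show ?thesis
  proof (intro conjI ballI impI)
    show "\<exists>\<nu>\<in>Pk k. W1 \<mu> \<nu> = (INF m\<in>Pk k. W1 \<mu> m)"
      using W1_min by simp
    show "\<forall>\<^sub>F n in sequentially. 0 < expectation (\<lambda>\<omega>. SC_opt n (\<lambda>i. X i \<omega>) k)"
      using lim pos by (rule order_tendstoD(1))
  next
    fix \<nu> assume "W1 \<mu> \<nu> = (INF m\<in>Pk k. W1 \<mu> m)"
    then have "W1 \<mu> \<nu> = ennreal (quant_risk \<mu> k c)"
      using W1_min by simp
    then show "W1 \<mu> \<nu> < \<infinity>" "(\<lambda>n. expectation (\<lambda>\<omega>. SC_opt n (\<lambda>i. X i \<omega>) k)) \<longlonglongrightarrow> enn2real (W1 \<mu> \<nu>)"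
      using lim pos by simp_all
  qed
qed

end
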